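(* Let $I\subset\mathbb{Z}$ be an interval of integers (with $|I|$ its number of elements), and let $a,b,q\in\mathbb{Z}$, $q\ge 1$, satisfy $\gcd(a,q)=1$ and: $b\in\mathbb{Z}$ arbitrary when $q$ is odd; $b$ even when $q\equiv 0 \pmod 4$; $b$ odd when $q\equiv 2\pmod 4$. Let $f(r)=\frac{a}{q}r^2+\frac{b}{q}r$. Then $$\Big|\sum_{k\in I}e^{2\pi i f(k)}\Big| = C\frac{|I|}{\sqrt q}+\mathcal{O}\big(\sqrt{q\ln q}\big),$$ for some number $C$ with $\frac12\le C\le\sqrt2$, where the implied constant in $\mathcal{O}$ is absolute. *)

theory Defs
  imports "HOL-Analysis.Analysis"
begin

definition quad_phase :: "int \<Rightarrow> int \<Rightarrow> int \<Rightarrow> int \<Rightarrow> real" where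
  "quad_phase a b q r = (real_of_int a / real_of_int q) * (real_of_int r)^2
                       + (real_of_int b / real_of_int q) * real_of_int r"

definition quad_exp_sum :: "int \<Rightarrow> int \<Rightarrow> int \<Rightarrow> int set \<Rightarrow> complex" where
  "quad_exp_sum a b q I = (\<Sum>k\<in>I. exp (2 * of_real pi * \<i> * of_real (quad_phase a b q k)))"

end

theory Submission
  imports Defs
begin

(*
  Write z(k) = e(f(k)); it is q-periodic in k. An interval of L q + r integers (0 <= r < q)
  therefore contributes L copies of the complete sum G = sum_{0 <= k < q} z(k) plus a sum
  over r consecutive integers, and the main term is L |G|.

  Expanding |G|^2 = sum_h e(f(h)) sum_k e(2ahk/q), orthogonality and gcd(a,q) = 1 leave only
  the shifts h with q | 2h, i.e. h = 0 and, for even q, h = q/2; the parity condition on b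
  makes e(f(q/2)) = 1. Hence |G| = C sqrt q with C = 1 for odd q and C = sqrt 2 for even q.

  For a sum S over at most q consecutive integers, Weyl differencing bounds |S|^2 by
  sum_{-q <= h < q} |sum_k e(2ahk/q)|. Each inner geometric sum is at most 1/sin(pi ||2ah/q||),
  and by Jordan's inequality sin x >= 2x/pi these cosecants sum to O(q ln q).
*)

definition e2pi :: "real \<Rightarrow> complex" where
  "e2pi x = exp (2 * of_real pi * \<i> * of_real x)"

lemma e2pi_add: "e2pi (x + y) = e2pi x * e2pi y"
  by (simp add: e2pi_def distrib_left exp_add)

lemma e2pi_eq_1_iff: "e2pi x = 1 \<longleftrightarrow> x \<in> \<int>"
proof -
  have "e2pi x = 1 \<longleftrightarrow> (\<exists>n::int. x = of_int n)"
    unfolding e2pi_def exp_eq_1 by (auto simp: field_simps)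
  then show ?thesis by (auto elim: Ints_cases)
qed

lemma e2pi_of_int [simp]: "e2pi (of_int n) = 1"
  by (simp add: e2pi_eq_1_iff)

lemma e2pi_0 [simp]: "e2pi 0 = 1"
  by (simp add: e2pi_def)

lemma e2pi_add_of_int: "e2pi (x + of_int n) = e2pi x"
  by (simp add: e2pi_add)

lemma norm_e2pi [simp]: "cmod (e2pi x) = 1"
  by (simp add: e2pi_def)

lemma cnj_e2pi: "cnj (e2pi x) = e2pi (- x)"
  by (simp add: e2pi_def exp_cnj)

lemma norm_e2pi_minus_1: "cmod (e2pi t - 1) = 2 * \<bar>sin (pi * t)\<bar>"
proof -
  have "e2pi t = cis (2 * pi * t)"
    by (simp add: e2pi_def cis_conv_exp mult_ac)
  then have "(cmod (e2pi t - 1))^2 = (cos (2 * (pi * t)) - 1)^2 + (sin (2 * (pi * t)))^2"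
    by (simp add: cmod_power2 mult.assoc)
  also have "\<dots> = 2 - 2 * cos (2 * (pi * t))"
    by (simp add: power2_diff algebra_simps)
  also have "\<dots> = (2 * \<bar>sin (pi * t)\<bar>)^2"
    by (simp add: cos_double_sin power_mult_distrib)
  finally show ?thesis
    by (rule power2_eq_imp_eq) simp_all
qed

lemma e2pi_geometric_sum:
  "(e2pi t - 1) * (\<Sum>k\<in>{A..<A + int n}. e2pi (t * of_int k)) = e2pi (t * of_int (A + int n)) - e2pi (t * of_int A)"
proof (induction n)
  case (Suc n)
  have "{A..<A + int (Suc n)} = insert (A + int n) {A..<A + int n}" by auto
  then show ?case
    using Suc by (simp add: algebra_simps flip: e2pi_add)
qed simp

lemma norm_e2pi_geometric_sum_le:
  assumes "sin (pi * t) \<noteq> 0"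
  shows "cmod (\<Sum>k\<in>{A..<B}. e2pi (t * of_int k)) \<le> 1 / \<bar>sin (pi * t)\<bar>"
proof (cases "A \<le> B")
  case True
  then obtain n where B: "B = A + int n" using zle_iff_zadd by blast
  have "2 * \<bar>sin (pi * t)\<bar> * cmod (\<Sum>k\<in>{A..<B}. e2pi (t * of_int k))
        = cmod (e2pi (t * of_int B) - e2pi (t * of_int A))"
    using e2pi_geometric_sum[of t A n] by (metis B norm_mult norm_e2pi_minus_1)
  also have "\<dots> \<le> 2"
    using norm_triangle_ineq4[of "e2pi (t * of_int B)" "e2pi (t * of_int A)"] by simp
  finally show ?thesis using assms by (simp add: field_simps)
qed (use assms in simp)

lemma e2pi_dvd_mult:
  assumes "q dvd u"
  shows "e2pi (of_int u / of_int q * of_int k) = 1"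
proof -
  from assms obtain c where "u = q * c" by blast
  \<comment> \<open>for q = 0 the hypothesis forces u = 0, and u / 0 = 0\<close>
  then have "of_int u / of_int q * of_int k = (of_int (if q = 0 then 0 else c * k) :: real)"
    by simp
  then show ?thesis by (metis e2pi_of_int)
qed

lemma e2pi_div_eq_1_iff:
  assumes "q \<noteq> 0"
  shows "e2pi (of_int u / of_int q) = 1 \<longleftrightarrow> q dvd u"
proof
  assume "e2pi (of_int u / of_int q) = 1"
  then obtain n where "of_int u / of_int q = (of_int n :: real)"
    by (auto simp: e2pi_eq_1_iff elim: Ints_cases)
  then have "real_of_int u = real_of_int (q * n)" using assms by (simp add: field_simps)
  then show "q dvd u" by (metis of_int_eq_iff dvd_triv_left)
qed (use e2pi_dvd_mult[of q u 1] in simp)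

lemma sum_e2pi_residues:
  assumes "1 \<le> q"
  shows "(\<Sum>k\<in>{0..<q}. e2pi (of_int u / of_int q * of_int k)) = (if q dvd u then of_int q else 0)"
proof (cases "q dvd u")
  case True
  have "e2pi (of_int u / of_int q * of_int k) = 1" for k
    using True by (rule e2pi_dvd_mult)
  then show ?thesis using True assms by simp
next
  case False
  have "(e2pi (u / q) - 1) * (\<Sum>k\<in>{0..<0 + int (nat q)}. e2pi (u / q * k))
        = e2pi (u / q * of_int (0 + int (nat q))) - e2pi (u / q * of_int 0)"
    by (rule e2pi_geometric_sum)
  also have "\<dots> = 0" using assms by simp
  finally show ?thesis
    using False assms e2pi_div_eq_1_iff[of q u] by simp
qed

lemma sin_ge_Jordan:
  assumes "0 \<le> x" "x \<le> pi / 2"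
  shows "2 / pi * x \<le> sin x"
proof -
  have cvx: "convex_on {0..pi} (\<lambda>x. - sin x)"
    by (rule convex_on_realI[where f' = "\<lambda>x. - cos x"])
       (auto intro!: derivative_eq_intros simp: cos_mono_le_eq)
  define t where "t = 2 / pi * x"
  have t: "0 \<le> t" "t \<le> 1" using assms by (auto simp: t_def field_simps)
  have "- sin ((1 - t) *\<^sub>R 0 + t *\<^sub>R (pi / 2)) \<le> (1 - t) * (- sin 0) + t * (- sin (pi / 2))"
    by (rule convex_onD[OF cvx]) (use t in auto)
  moreover have "(1 - t) *\<^sub>R 0 + t *\<^sub>R (pi / 2) = x" by (simp add: t_def)
  ultimately show ?thesis by (simp add: t_def)
qed

lemma inverse_sin_le_reciprocals:
  fixes q u :: int
  assumes "0 < u" "u < q"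
  shows "1 / sin (pi * u / q) \<le> q / (2 * u) + q / (2 * (q - u))"
proof -
  have bound: "1 / sin (pi * v / q) \<le> q / (2 * v)" if "0 < v" "2 * v \<le> q" for v :: int
  proof -
    have "2 / pi * (pi * v / q) \<le> sin (pi * v / q)"
      by (rule sin_ge_Jordan) (use that in \<open>auto simp: field_simps\<close>)
    then have sin_ge: "2 * v / q \<le> sin (pi * v / q)" by simp
    moreover have "0 < 2 * v / q" using that by simp
    ultimately have "0 < sin (pi * v / q)" by linarith
    with sin_ge that show ?thesis by (simp add: field_simps)
  qed
  have nonneg: "0 \<le> q / (2 * u)" "0 \<le> q / (2 * (q - u))" using assms by auto
  show ?thesis
  proof (cases "2 * u \<le> q")
    case True
    then show ?thesis using bound[OF assms(1) True] nonneg(2) by linarith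
  next
    case False
    have "pi * (q - u) / q = pi - pi * u / q" using assms by (simp add: field_simps)
    then have "sin (pi * real_of_int (q - u) / q) = sin (pi * u / q)" by simp
    moreover have "1 / sin (pi * real_of_int (q - u) / q) \<le> q / (2 * real_of_int (q - u))"
      using bound[of "q - u"] False assms by simp
    ultimately have "1 / sin (pi * u / q) \<le> q / (2 * (q - u))" by simp
    then show ?thesis using nonneg(1) by linarith
  qed
qed

lemma sum_reciprocals_le_ln:
  fixes q :: int
  assumes "1 \<le> q"
  shows "(\<Sum>u\<in>{1..<q}. 1 / real_of_int u) \<le> 1 + ln q"
proof -
  have "(\<Sum>u\<in>{1..<q}. 1 / real_of_int u) = harm (nat q - 1)"
  proof -
    have "{1..nat q - 1} = {1..<nat q}" using assms by auto
    then have "{1..<q} = int ` {1..nat q - 1}" using assms by (simp add: image_int_atLeastLessThan)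
    then show ?thesis by (simp add: sum.reindex harm_def divide_inverse)
  qed
  also have "\<dots> \<le> 1 + ln q"
  proof (cases "q = 1")
    case False
    then have "1 \<le> nat q - 1" using assms by auto
    then have "harm (nat q - 1) \<le> ln (real (nat q - 1)) + 1"
      using euler_mascheroni_sequence_decreasing[of 1 "nat q - 1"] by (simp add: harm_def)
    also have "ln (real (nat q - 1)) \<le> ln q" using assms False by auto
    finally show ?thesis by simp
  qed (simp add: harm_def)
  finally show ?thesis .
qed

definition linear_sum_bound :: "int \<Rightarrow> int \<Rightarrow> real" where
  "linear_sum_bound q u =
     (if q dvd u then real_of_int q else 1 / sin (pi * real_of_int (u mod q) / real_of_int q))"

lemma linear_sum_bound_mod [simp]: "linear_sum_bound q (u mod q) = linear_sum_bound q u"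
  by (simp add: linear_sum_bound_def dvd_mod_iff)

lemma linear_sum_bound_nonneg:
  assumes "1 \<le> q"
  shows "0 \<le> linear_sum_bound q u"
proof -
  have "0 < sin (pi * (u mod q) / q)" if "\<not> q dvd u"
  proof (rule sin_gt_zero)
    have "0 < u mod q" using that assms by (simp add: dvd_eq_mod_eq_0 order_less_le)
    then show "0 < pi * (u mod q) / q" using assms by simp
    show "pi * (u mod q) / q < pi" using assms by (simp add: field_simps)
  qed
  then show ?thesis using assms by (auto simp: linear_sum_bound_def)
qed

lemma norm_linear_exp_sum_le:
  fixes q u A B :: int
  assumes "1 \<le> q" "B - A \<le> q"
  shows "cmod (\<Sum>k\<in>{A..<B}. e2pi (u / q * k)) \<le> linear_sum_bound q u"
proof (cases "q dvd u")
  case True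
  then have "e2pi (u / q * k) = 1" for k :: int
    by (rule e2pi_dvd_mult)
  then show ?thesis
    using True assms by (simp add: linear_sum_bound_def)
next
  case False
  define v where "v = u mod q"
  have "0 \<le> v" "v \<noteq> 0" "v < q"
    using False assms by (simp_all add: v_def dvd_eq_mod_eq_0)
  then have v: "0 < v" "v < q" by simp_all
  have "u / q * k = v / q * k + of_int (u div q * k)" for k :: int
  proof -
    have "real_of_int u = real_of_int (v + q * (u div q))" by (simp add: v_def)
    then show ?thesis using assms by (simp add: field_simps)
  qed
  then have "e2pi (u / q * k) = e2pi (v / q * k)" for k :: int
    by (metis e2pi_add_of_int)
  then have "(\<Sum>k\<in>{A..<B}. e2pi (u / q * k)) = (\<Sum>k\<in>{A..<B}. e2pi (v / q * k))"
    by simp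
  moreover have sin_pos: "0 < sin (pi * (v / q))"
    using v by (intro sin_gt_zero) (auto simp: field_simps)
  ultimately have "cmod (\<Sum>k\<in>{A..<B}. e2pi (u / q * k)) \<le> 1 / \<bar>sin (pi * (v / q))\<bar>"
    using norm_e2pi_geometric_sum_le[of "v / q"] by simp
  also have "\<dots> = linear_sum_bound q u"
    using False sin_pos by (simp add: linear_sum_bound_def v_def)
  finally show ?thesis .
qed

lemma sum_linear_sum_bound_le:
  assumes "1 \<le> q"
  shows "(\<Sum>u\<in>{0..<q}. linear_sum_bound q u) \<le> q * (2 + ln q)"
proof -
  define H where "H = (\<Sum>u\<in>{1..<q}. 1 / real_of_int u)"
  have reflect: "(\<Sum>u\<in>{1..<q}. 1 / real_of_int (q - u)) = H"
    unfolding H_def by (rule sum.reindex_bij_witness[where i = "\<lambda>u. q - u" and j = "\<lambda>u. q - u"]) auto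
  have "{0..<q} = insert 0 {1..<q}" using assms by auto
  then have "(\<Sum>u\<in>{0..<q}. linear_sum_bound q u) = q + (\<Sum>u\<in>{1..<q}. linear_sum_bound q u)"
    by (simp add: linear_sum_bound_def)
  also have "(\<Sum>u\<in>{1..<q}. linear_sum_bound q u) \<le> (\<Sum>u\<in>{1..<q}. q / (2 * u) + q / (2 * (q - u)))"
  proof (rule sum_mono)
    fix u assume "u \<in> {1..<q}"
    then show "linear_sum_bound q u \<le> q / (2 * u) + q / (2 * (q - u))"
      using inverse_sin_le_reciprocals[of u q] by (simp add: linear_sum_bound_def zdvd_not_zless)
  qed
  also have "\<dots> = q / 2 * H + q / 2 * (\<Sum>u\<in>{1..<q}. 1 / real_of_int (q - u))"
    by (simp add: H_def sum.distrib sum_distrib_left)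
  also have "\<dots> = q * H"
    using reflect by simp
  also have "\<dots> \<le> q * (1 + ln q)"
    using sum_reciprocals_le_ln[OF assms] assms by (simp add: H_def)
  finally show ?thesis by (simp add: algebra_simps)
qed

lemma sum_periodic_affine:
  fixes F :: "int \<Rightarrow> 'a::comm_monoid_add"
  assumes q: "1 \<le> q" and periodic: "\<And>k. F (k mod q) = F k" and "coprime c q"
  shows "(\<Sum>i\<in>{0..<q}. F (c * i + m)) = (\<Sum>k\<in>{0..<q}. F k)"
proof -
  define g where "g i = (c * i + m) mod q" for i
  have "inj_on g {0..<q}"
  proof
    fix i j assume ij: "i \<in> {0..<q}" "j \<in> {0..<q}" "g i = g j"
    then have "q dvd c * (i - j)"
      unfolding g_def by (metis mod_eq_dvd_iff add_diff_cancel_right right_diff_distrib)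
    then have "q dvd i - j"
      using \<open>coprime c q\<close> by (metis coprime_commute coprime_dvd_mult_right_iff)
    moreover have "\<bar>i - j\<bar> < q" using ij by auto
    ultimately show "i = j" using dvd_imp_le_int[of "i - j" q] by fastforce
  qed
  moreover have "g ` {0..<q} \<subseteq> {0..<q}" using q by (auto simp: g_def)
  ultimately have "bij_betw g {0..<q} {0..<q}"
    by (simp add: bij_betw_def card_image card_subset_eq)
  then have "(\<Sum>i\<in>{0..<q}. F (g i)) = (\<Sum>k\<in>{0..<q}. F k)"
    by (rule sum.reindex_bij_betw)
  then show ?thesis by (simp add: g_def periodic)
qed

lemma sum_periodic_interval:
  fixes F :: "int \<Rightarrow> 'a::comm_monoid_add"
  assumes "1 \<le> q" and "\<And>k. F (k mod q) = F k"
  shows "(\<Sum>k\<in>{m..<m + q}. F k) = (\<Sum>k\<in>{0..<q}. F k)"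
proof -
  have "(\<Sum>k\<in>{m..<m + q}. F k) = (\<Sum>i\<in>{0..<q}. F (1 * i + m))"
    by (rule sum.reindex_bij_witness[where i = "\<lambda>i. i + m" and j = "\<lambda>k. k - m"]) auto
  also have "\<dots> = (\<Sum>k\<in>{0..<q}. F k)"
    by (rule sum_periodic_affine) (use assms in simp_all)
  finally show ?thesis .
qed

lemma sum_periodic_blocks:
  fixes F :: "int \<Rightarrow> 'a::comm_ring_1"
  assumes "1 \<le> q" and "\<And>k. F (k mod q) = F k" and "0 \<le> r"
  shows "(\<Sum>k\<in>{m..<m + int L * q + r}. F k)
           = of_nat L * (\<Sum>k\<in>{0..<q}. F k) + (\<Sum>k\<in>{m + int L * q..<m + int L * q + r}. F k)"
proof (induction L arbitrary: m)
  case (Suc L)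
  have "0 \<le> int L * q" using assms(1) by simp
  moreover have "m + int (Suc L) * q + r = (m + q) + int L * q + r" by (simp add: algebra_simps)
  ultimately have "{m..<m + int (Suc L) * q + r} = {m..<m + q} \<union> {m + q..<(m + q) + int L * q + r}"
    using assms(1,3) ivl_disj_un_two(3)[of m "m + q" "(m + q) + int L * q + r"] by (simp add: ac_simps)
  then have "(\<Sum>k\<in>{m..<m + int (Suc L) * q + r}. F k)
               = (\<Sum>k\<in>{m..<m + q}. F k) + (\<Sum>k\<in>{m + q..<(m + q) + int L * q + r}. F k)"
    by (simp add: sum.union_disjoint)
  also note sum_periodic_interval[where F = F, OF assms(1,2)]
  also note Suc.IH[of "m + q"]
  finally show ?case by (simp add: algebra_simps)
qed simp

lemma sum_pairs_by_difference:
  fixes J D :: "int set" and F :: "int \<Rightarrow> int \<Rightarrow> 'a::comm_monoid_add"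
  assumes "finite J" "finite D" and diff: "\<And>j k. j \<in> J \<Longrightarrow> k \<in> J \<Longrightarrow> j - k \<in> D"
  shows "(\<Sum>j\<in>J. \<Sum>k\<in>J. F j k) = (\<Sum>h\<in>D. \<Sum>k\<in>{k\<in>J. k + h \<in> J}. F (k + h) k)"
proof -
  have "(\<Sum>j\<in>J. F j k) = (\<Sum>h\<in>{h\<in>D. k + h \<in> J}. F (k + h) k)" if "k \<in> J" for k
  proof -
    have "{h\<in>D. k + h \<in> J} = (\<lambda>j. j - k) ` J" using diff[OF _ that] by force
    then show ?thesis by (simp add: sum.reindex inj_on_def)
  qed
  then have "(\<Sum>j\<in>J. \<Sum>k\<in>J. F j k) = (\<Sum>k\<in>J. \<Sum>h\<in>D. if k + h \<in> J then F (k + h) k else 0)"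
    using assms(2) by (subst sum.swap) (simp add: sum.inter_filter)
  also have "\<dots> = (\<Sum>h\<in>D. \<Sum>k\<in>{k\<in>J. k + h \<in> J}. F (k + h) k)"
    using assms(1) by (subst sum.swap) (simp add: sum.inter_filter)
  finally show ?thesis .
qed

lemma norm_sum_squared_le_correlations:
  fixes z :: "int \<Rightarrow> complex"
  assumes "finite J" "finite D" "\<And>j k. j \<in> J \<Longrightarrow> k \<in> J \<Longrightarrow> j - k \<in> D"
  shows "(cmod (\<Sum>k\<in>J. z k))^2 \<le> (\<Sum>h\<in>D. cmod (\<Sum>k\<in>{k\<in>J. k + h \<in> J}. z (k + h) * cnj (z k)))"
proof -
  have "complex_of_real ((cmod (\<Sum>k\<in>J. z k))^2) = (\<Sum>j\<in>J. \<Sum>k\<in>J. z j * cnj (z k))"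
    unfolding complex_norm_square by (simp add: sum_product)
  also have "\<dots> = (\<Sum>h\<in>D. \<Sum>k\<in>{k\<in>J. k + h \<in> J}. z (k + h) * cnj (z k))"
    by (rule sum_pairs_by_difference[OF assms])
  finally have "(cmod (\<Sum>k\<in>J. z k))^2 = cmod (\<Sum>h\<in>D. \<Sum>k\<in>{k\<in>J. k + h \<in> J}. z (k + h) * cnj (z k))"
    by (metis abs_power2 norm_of_real)
  also have "\<dots> \<le> (\<Sum>h\<in>D. cmod (\<Sum>k\<in>{k\<in>J. k + h \<in> J}. z (k + h) * cnj (z k)))"
    by (rule norm_sum)
  finally show ?thesis .
qed

lemma quad_exp_sum_eq: "quad_exp_sum a b q I = (\<Sum>k\<in>I. e2pi (quad_phase a b q k))"
  by (simp add: quad_exp_sum_def e2pi_def)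

lemma e2pi_quad_phase_mod:
  assumes "q \<noteq> 0"
  shows "e2pi (quad_phase a b q (k mod q)) = e2pi (quad_phase a b q k)"
proof -
  define r d where "r = k mod q" and "d = k div q"
  have "k = r + d * q" by (simp add: r_def d_def)
  moreover have "quad_phase a b q (r + d * q) = quad_phase a b q r + of_int (2 * a * r * d + a * d^2 * q + b * d)"
    using assms by (simp add: quad_phase_def field_simps power2_eq_square)
  ultimately show ?thesis by (metis r_def e2pi_add_of_int)
qed

lemma e2pi_quad_phase_correlation:
  assumes "q \<noteq> 0"
  shows "e2pi (quad_phase a b q (k + h)) * cnj (e2pi (quad_phase a b q k))
           = e2pi (quad_phase a b q h) * e2pi (of_int (2 * a * h) / of_int q * of_int k)"
proof -
  have "quad_phase a b q (k + h) + - quad_phase a b q k = quad_phase a b q h + of_int (2 * a * h) / of_int q * of_int k"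
    using assms by (simp add: quad_phase_def field_simps power2_eq_square)
  then show ?thesis by (simp add: cnj_e2pi flip: e2pi_add)
qed

lemma sum_linear_sum_bound_differences_le:
  assumes q: "1 \<le> q" and "coprime a q"
  shows "(\<Sum>h\<in>{-q..<q}. linear_sum_bound q (2 * a * h)) \<le> 4 * real_of_int q * (2 + ln q)"
proof -
  have periodic: "linear_sum_bound q (c * (k mod q)) = linear_sum_bound q (c * k)" for c k
    by (metis linear_sum_bound_mod mod_mult_right_eq)
  have "{-q..<q} = {-q..<-q + q} \<union> {0..<q}" by auto
  then have "(\<Sum>h\<in>{-q..<q}. linear_sum_bound q (2 * a * h)) = 2 * (\<Sum>h\<in>{0..<q}. linear_sum_bound q (2 * a * h))"
    using sum_periodic_interval[of q "\<lambda>h. linear_sum_bound q (2 * a * h)" "-q"] q periodic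
    by (simp add: sum.union_disjoint)
  also have "(\<Sum>h\<in>{0..<q}. linear_sum_bound q (2 * a * h)) = (\<Sum>h\<in>{0..<q}. linear_sum_bound q (2 * h))"
    using sum_periodic_affine[of q "\<lambda>h. linear_sum_bound q (2 * h)" a 0] assms periodic
    by (simp add: mult.assoc mult.left_commute)
  also have "\<dots> = (\<Sum>u\<in>(\<lambda>h. 2 * h) ` {0..<q}. linear_sum_bound q u)"
    by (simp add: sum.reindex inj_on_def)
  also have "\<dots> \<le> (\<Sum>u\<in>{0..<q} \<union> {q..<q + q}. linear_sum_bound q u)"
    by (rule sum_mono2) (auto simp: linear_sum_bound_nonneg[OF q])
  also have "\<dots> = 2 * (\<Sum>u\<in>{0..<q}. linear_sum_bound q u)"
    using sum_periodic_interval[of q "linear_sum_bound q" q] q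
    by (simp add: sum.union_disjoint)
  also have "\<dots> \<le> 2 * (q * (2 + ln q))"
    using sum_linear_sum_bound_le[OF q] by simp
  finally show ?thesis by simp
qed

lemma norm_quad_exp_sum_short_sq_le:
  assumes q: "1 \<le> q" and "coprime a q" and "0 \<le> N" "N \<le> q"
  shows "(cmod (quad_exp_sum a b q {m..<m + N}))^2 \<le> 4 * real_of_int q * (2 + ln q)"
proof -
  define J where "J = {m..<m + N}"
  define z where "z k = e2pi (quad_phase a b q k)" for k
  have "(cmod (\<Sum>k\<in>J. z k))^2 \<le> (\<Sum>h\<in>{-q..<q}. cmod (\<Sum>k\<in>{k\<in>J. k + h \<in> J}. z (k + h) * cnj (z k)))"
    by (rule norm_sum_squared_le_correlations) (use assms in \<open>auto simp: J_def\<close>)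
  also have "\<dots> \<le> (\<Sum>h\<in>{-q..<q}. linear_sum_bound q (2 * a * h))"
  proof (rule sum_mono)
    fix h
    have "{k\<in>J. k + h \<in> J} = {max m (m - h)..<min (m + N) (m + N - h)}" by (auto simp: J_def)
    moreover have "min (m + N) (m + N - h) - max m (m - h) \<le> q" using assms by linarith
    ultimately have "cmod (\<Sum>k\<in>{k\<in>J. k + h \<in> J}. e2pi (of_int (2 * a * h) / q * k)) \<le> linear_sum_bound q (2 * a * h)"
      using norm_linear_exp_sum_le[OF q] by presburger
    then show "cmod (\<Sum>k\<in>{k\<in>J. k + h \<in> J}. z (k + h) * cnj (z k)) \<le> linear_sum_bound q (2 * a * h)"
      using q by (simp add: z_def e2pi_quad_phase_correlation norm_mult flip: sum_distrib_left)
  qed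
  also have "\<dots> \<le> 4 * real_of_int q * (2 + ln q)"
    by (rule sum_linear_sum_bound_differences_le) (use assms in simp_all)
  finally show ?thesis by (simp add: J_def z_def quad_exp_sum_eq)
qed

lemma dvd_double_residues:
  fixes q :: int
  assumes "1 \<le> q"
  shows "{h\<in>{0..<q}. q dvd 2 * h} = insert 0 (if even q then {q div 2} else {})"
proof (intro equalityI subsetI)
  fix h assume "h \<in> {h\<in>{0..<q}. q dvd 2 * h}"
  then obtain c where h: "0 \<le> h" "h < q" "2 * h = q * c" by auto
  then have "0 \<le> q * c" "q * c < q * 2" by linarith+
  then have "0 \<le> c" "c < 2" using assms by (simp_all add: zero_le_mult_iff)
  then consider "c = 0" | "c = 1" by linarith
  then show "h \<in> insert 0 (if even q then {q div 2} else {})"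
    using h by cases auto
qed (use assms in \<open>auto split: if_splits\<close>)

lemma quad_exp_sum_period_norm_sq:
  assumes q: "1 \<le> q" and "coprime a q"
  shows "complex_of_real ((cmod (quad_exp_sum a b q {0..<q}))^2)
           = of_int q * (\<Sum>h\<in>{h\<in>{0..<q}. q dvd 2 * h}. e2pi (quad_phase a b q h))"
proof -
  define P where "P = {0..<q}"
  define z where "z k = e2pi (quad_phase a b q k)" for k
  have periodic: "z (k mod q) = z k" for k
    using q by (simp add: z_def e2pi_quad_phase_mod)
  have "complex_of_real ((cmod (\<Sum>k\<in>P. z k))^2) = (\<Sum>j\<in>P. \<Sum>k\<in>P. z j * cnj (z k))"
    unfolding complex_norm_square by (simp add: sum_product)
  also have "\<dots> = (\<Sum>k\<in>P. \<Sum>j\<in>P. z j * cnj (z k))"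
    by (rule sum.swap)
  also have "\<dots> = (\<Sum>k\<in>P. \<Sum>h\<in>P. z (h + k) * cnj (z k))"
  proof (rule sum.cong[OF refl])
    fix k
    show "(\<Sum>j\<in>P. z j * cnj (z k)) = (\<Sum>h\<in>P. z (h + k) * cnj (z k))"
      using sum_periodic_affine[of q "\<lambda>j. z j * cnj (z k)" 1 k] q periodic by (simp add: P_def)
  qed
  also have "\<dots> = (\<Sum>h\<in>P. z h * (\<Sum>k\<in>P. e2pi (of_int (2 * a * h) / q * k)))"
  proof -
    have "z (h + k) * cnj (z k) = z h * e2pi (of_int (2 * a * h) / q * k)" for h k
      using e2pi_quad_phase_correlation[of q a b k h] q by (simp add: z_def add.commute)
    then show ?thesis by (subst sum.swap) (simp add: sum_distrib_left)
  qed
  also have "\<dots> = (\<Sum>h\<in>P. if q dvd 2 * h then of_int q * z h else 0)"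
  proof (rule sum.cong[OF refl])
    fix h
    have dvd_iff: "q dvd 2 * a * h \<longleftrightarrow> q dvd 2 * h"
      using \<open>coprime a q\<close> coprime_dvd_mult_right_iff[of q a "2 * h"]
      by (simp add: ac_simps)
    then show "z h * (\<Sum>k\<in>P. e2pi (of_int (2 * a * h) / q * k)) = (if q dvd 2 * h then of_int q * z h else 0)"
      unfolding P_def sum_e2pi_residues[OF q] dvd_iff by simp
  qed
  also have "\<dots> = of_int q * (\<Sum>h\<in>{h\<in>P. q dvd 2 * h}. z h)"
    unfolding sum_distrib_left by (rule sum.inter_filter[symmetric]) (simp add: P_def)
  finally show ?thesis by (simp add: P_def z_def quad_exp_sum_eq)
qed

lemma quad_phase_half_period_Ints:
  assumes "even q" "coprime a q" "q mod 4 = 0 \<longrightarrow> even b" "q mod 4 = 2 \<longrightarrow> odd b"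
  shows "quad_phase a b q (q div 2) \<in> \<int>"
proof (cases "q = 0")
  case False
  define s where "s = q div 2"
  have q: "q = 2 * s" using \<open>even q\<close> by (simp add: s_def)
  have "even (a * s + b)"
  proof -
    have "q mod 4 = 0 \<or> q mod 4 = 2" using \<open>even q\<close> by presburger
    then consider "q mod 4 = 0" | "q mod 4 = 2" by blast
    then show ?thesis
    proof cases
      case 1
      then have "even s" using q by presburger
      then show ?thesis using 1 assms(3) by simp
    next
      case 2
      then have "odd s" using q by presburger
      moreover have "odd a" using \<open>coprime a q\<close> q by auto
      ultimately show ?thesis using 2 assms(4) by simp
    qed
  qed
  then obtain t where t: "a * s + b = 2 * t" by blast
  have "quad_phase a b q s = (a * s + b) / 2"
    using False q by (simp add: quad_phase_def field_simps power2_eq_square)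
  also have "\<dots> = of_int t" by (simp add: t flip: of_int_mult of_int_add)
  finally show ?thesis by (simp add: s_def)
qed (simp add: quad_phase_def)

definition gauss_const :: "int \<Rightarrow> real" where
  "gauss_const q = (if even q then sqrt 2 else 1)"

lemma gauss_const_bounds: "1 / 2 \<le> gauss_const q \<and> gauss_const q \<le> sqrt 2"
proof -
  have "1 \<le> sqrt (2::real)" by simp
  then show ?thesis by (cases "even q") (simp_all add: gauss_const_def del: real_sqrt_ge_1_iff)
qed

lemma norm_quad_exp_sum_period:
  assumes q: "1 \<le> q" and "coprime a q" "q mod 4 = 0 \<longrightarrow> even b" "q mod 4 = 2 \<longrightarrow> odd b"
  shows "cmod (quad_exp_sum a b q {0..<q}) = gauss_const q * sqrt q"
proof -
  have "(\<Sum>h\<in>{h\<in>{0..<q}. q dvd 2 * h}. e2pi (quad_phase a b q h)) = (if even q then 2 else 1)"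
  proof (cases "even q")
    case True
    then have "e2pi (quad_phase a b q (q div 2)) = 1"
      using quad_phase_half_period_Ints[OF _ assms(2-4)] e2pi_eq_1_iff by blast
    moreover have "q div 2 \<noteq> 0" using q True by auto
    ultimately show ?thesis
      unfolding dvd_double_residues[OF q] using True by (simp add: quad_phase_def)
  qed (unfold dvd_double_residues[OF q], simp add: quad_phase_def)
  then have "complex_of_real ((cmod (quad_exp_sum a b q {0..<q}))^2)
               = complex_of_real (real_of_int q * (if even q then 2 else 1))"
    using quad_exp_sum_period_norm_sq[OF assms(1,2), of b] by simp
  then have "(cmod (quad_exp_sum a b q {0..<q}))^2 = real_of_int q * (if even q then 2 else 1)"
    by (simp only: of_real_eq_iff)
  also have "\<dots> = (gauss_const q * sqrt q)^2"
    using q by (simp add: gauss_const_def power_mult_distrib)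
  finally show ?thesis
    by (rule power2_eq_imp_eq) (use q in \<open>simp_all add: gauss_const_def\<close>)
qed

lemma quad_exp_sum_short_error_le:
  assumes q: "1 \<le> q" and "coprime a q" "0 \<le> r" "r < q"
  shows "cmod (quad_exp_sum a b q {m..<m + r}) + gauss_const q * r / sqrt q \<le> 6 * sqrt (q * ln q)"
proof (cases "q = 1")
  case True
  then have "r = 0" using assms by simp
  with True show ?thesis by (simp add: quad_exp_sum_def)
next
  case False
  define X where "X = sqrt (q * ln q)"
  have "ln 2 \<le> ln (real_of_int q)" using q False by simp
  then have ln_q: "2 / 3 \<le> ln (real_of_int q)" using ln2_ge_two_thirds by linarith
  have "(cmod (quad_exp_sum a b q {m..<m + r}))^2 \<le> 4 * real_of_int q * (2 + ln q)"
    using norm_quad_exp_sum_short_sq_le assms by simp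
  also have "\<dots> \<le> (4 * X)^2"
    using q ln_q by (simp add: X_def power_mult_distrib)
  finally have "cmod (quad_exp_sum a b q {m..<m + r}) \<le> 4 * X"
    by (rule power2_le_imp_le) (use q ln_q in \<open>simp add: X_def\<close>)
  moreover have "gauss_const q * r / sqrt q \<le> 2 * X"
  proof -
    have "gauss_const q * r / sqrt q = gauss_const q * (r / sqrt q)" by simp
    also have "\<dots> \<le> sqrt 2 * (q / sqrt q)"
      using gauss_const_bounds[of q] assms by (intro mult_mono divide_right_mono) auto
    also have "\<dots> = sqrt (2 * real_of_int q)"
      using q by (simp add: real_div_sqrt real_sqrt_mult)
    also have "\<dots> \<le> sqrt (4 * (q * ln q))"
    proof (rule real_sqrt_le_mono)
      have "q * (1 / 2) \<le> q * ln q" using q ln_q by (intro mult_left_mono) auto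
      then show "2 * real_of_int q \<le> 4 * (q * ln q)" by simp
    qed
    also have "\<dots> = 2 * X" by (simp add: X_def real_sqrt_mult)
    finally show ?thesis .
  qed
  ultimately show ?thesis by (simp add: X_def)
qed

lemma quad_exp_sum_approx:
  assumes q: "1 \<le> q" and "coprime a q" "q mod 4 = 0 \<longrightarrow> even b" "q mod 4 = 2 \<longrightarrow> odd b"
  shows "\<bar>cmod (quad_exp_sum a b q {m..n}) - gauss_const q * real (card {m..n}) / sqrt q\<bar>
           \<le> 6 * sqrt (q * ln q)"
proof (cases "m \<le> n")
  case True
  define L r where "L = nat ((n - m + 1) div q)" and "r = (n - m + 1) mod q"
  have r: "0 \<le> r" "r < q" using q by (simp_all add: r_def)
  have "0 \<le> (n - m + 1) div q" using True q by (simp add: pos_imp_zdiv_nonneg_iff)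
  then have length: "n - m + 1 = int L * q + r"
    by (simp add: L_def r_def)
  then have interval: "{m..n} = {m..<m + int L * q + r}" by auto
  define G R where "G = quad_exp_sum a b q {0..<q}"
    and "R = quad_exp_sum a b q {m + int L * q..<m + int L * q + r}"
  have sum_eq: "quad_exp_sum a b q {m..n} = of_nat L * G + R"
    unfolding interval G_def R_def quad_exp_sum_eq
    using sum_periodic_blocks[of q "\<lambda>k. e2pi (quad_phase a b q k)" r m L] q r e2pi_quad_phase_mod
    by simp
  have main_term: "gauss_const q * real (card {m..n}) / sqrt q = L * cmod G + gauss_const q * r / sqrt q"
    using q r True length norm_quad_exp_sum_period[OF assms]
    by (simp add: G_def field_simps)
  have "0 \<le> gauss_const q * r / sqrt q"
    using r gauss_const_bounds[of q] by simp
  moreover have "L * cmod G - cmod R \<le> cmod (of_nat L * G + R)"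
    and "cmod (of_nat L * G + R) \<le> L * cmod G + cmod R"
    using norm_diff_ineq[of "of_nat L * G" R] norm_triangle_ineq[of "of_nat L * G" R] by (simp_all add: norm_mult)
  ultimately show ?thesis
    using quad_exp_sum_short_error_le[OF q assms(2) r, of b "m + int L * q"]
    unfolding sum_eq main_term R_def by linarith
qed (use q in \<open>simp add: quad_exp_sum_def\<close>)

theorem lemma2p2:
  shows "\<exists>K::real. \<forall>a b q :: int.
           q \<ge> 1 \<and> coprime a q \<and> (q mod 4 = 0 \<longrightarrow> even b) \<and> (q mod 4 = 2 \<longrightarrow> odd b) \<longrightarrow>
           (\<exists>C::real. 1/2 \<le> C \<and> C \<le> sqrt 2 \<and>
              (\<forall>m n :: int.
                 \<bar>cmod (quad_exp_sum a b q {m..n}) - C * real (card {m..n}) / sqrt (real_of_int q)\<bar>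
                   \<le> K * sqrt (real_of_int q * ln (real_of_int q))))"
proof (rule exI[of _ 6], intro allI impI)
  fix a b q :: int
  assume "q \<ge> 1 \<and> coprime a q \<and> (q mod 4 = 0 \<longrightarrow> even b) \<and> (q mod 4 = 2 \<longrightarrow> odd b)"
  then show "\<exists>C::real. 1/2 \<le> C \<and> C \<le> sqrt 2 \<and>
              (\<forall>m n :: int.
                 \<bar>cmod (quad_exp_sum a b q {m..n}) - C * real (card {m..n}) / sqrt (real_of_int q)\<bar>
                   \<le> 6 * sqrt (real_of_int q * ln (real_of_int q)))"
    using gauss_const_bounds quad_exp_sum_approx by blast
qed

end
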